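(* Let $(X,\|\cdot\|_X)$ be a Banach space and $\mathcal{K}\subset X$ a bounded set. For every $n\ge1$, every $\gamma>0$ and every norm $\|\cdot\|_{Y_n}$ on $\mathbb{R}^n$, $$\mathrm{rad}(\mathcal{K})-\gamma\le d^\gamma(\mathcal{K},Y_n)_X\le\mathrm{rad}(\mathcal{K}).$$
   Context: $\mathrm{rad}(\mathcal{K})=\inf_{g\in X}\sup_{f\in\mathcal{K}}\|f-g\|_X$. For a norm $\|\cdot\|_{Y_n}$ on $\mathbb{R}^n$ let $B_{Y_n}=\{y\in\mathbb{R}^n:\|y\|_{Y_n}\le1\}$. The fixed Lipschitz width is $d^\gamma(\mathcal{K},Y_n)_X=\inf_{\Phi}\sup_{f\in\mathcal{K}}\inf_{y\in B_{Y_n}}\|f-\Phi(y)\|_X$, the infimum being over all maps $\Phi:B_{Y_n}\to X$ with $\|\Phi(y)-\Phi(y')\|_X\le\gamma\|y-y'\|_{Y_n}$ for all $y,y'\in B_{Y_n}$. *)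

theory Defs
  imports "HOL-Analysis.Analysis"
begin

definition is_norm :: "('b::real_vector \<Rightarrow> real) \<Rightarrow> bool" where
  "is_norm N \<longleftrightarrow>
     (\<forall>x. 0 \<le> N x) \<and> (\<forall>x. N x = 0 \<longleftrightarrow> x = 0) \<and>
     (\<forall>c x. N (c *\<^sub>R x) = \<bar>c\<bar> * N x) \<and>
     (\<forall>x y. N (x + y) \<le> N x + N y)"

definition unit_ball_of :: "('b::real_vector \<Rightarrow> real) \<Rightarrow> 'b set" where
  "unit_ball_of N = {y. N y \<le> 1}"

definition rad :: "'a::real_normed_vector set \<Rightarrow> real" where
  "rad K = (INF g. SUP f\<in>K. norm (f - g))"

definition lip_maps :: "real \<Rightarrow> ('b::real_vector \<Rightarrow> real) \<Rightarrow> ('b \<Rightarrow> 'a::real_normed_vector) set" where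
  "lip_maps \<gamma> N = {\<Phi>. \<forall>y\<in>unit_ball_of N. \<forall>y'\<in>unit_ball_of N.
                         norm (\<Phi> y - \<Phi> y') \<le> \<gamma> * N (y - y')}"

definition lip_width :: "'a::real_normed_vector set \<Rightarrow> real \<Rightarrow> ('b::real_vector \<Rightarrow> real) \<Rightarrow> real" where
  "lip_width K \<gamma> N =
     (INF \<Phi>\<in>(lip_maps \<gamma> N :: ('b \<Rightarrow> 'a) set).
        SUP f\<in>K. INF y\<in>unit_ball_of N. norm (f - \<Phi> y))"

end

theory Submission
  imports Defs
begin

text \<open>Constant maps are \<open>\<gamma>\<close>-Lipschitz, and a constant map \<open>g\<close> approximates \<open>K\<close> with
  error exactly \<open>sup\<^sub>f\<^sub>\<in>\<^sub>K \<parallel>f - g\<parallel>\<close>; this gives the upper bound. Conversely, a \<open>\<gamma>\<close>-Lipschitz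
  map \<open>\<Phi>\<close> sends the unit ball into the closed ball of radius \<open>\<gamma>\<close> about \<open>\<Phi> 0\<close>, so by the
  triangle inequality its error is at least \<open>sup\<^sub>f\<^sub>\<in>\<^sub>K \<parallel>f - \<Phi> 0\<parallel> - \<gamma> \<ge> rad K - \<gamma>\<close>.\<close>

definition center_radius :: "'a::real_normed_vector set \<Rightarrow> 'a \<Rightarrow> real" where
  "center_radius K g = (SUP f\<in>K. norm (f - g))"

definition approx_error ::
    "'a::real_normed_vector set \<Rightarrow> ('b::real_vector \<Rightarrow> real) \<Rightarrow> ('b \<Rightarrow> 'a) \<Rightarrow> real" where
  "approx_error K N \<Phi> = (SUP f\<in>K. INF y\<in>unit_ball_of N. norm (f - \<Phi> y))"

lemma rad_eq_INF_center_radius: "rad K = (INF g. center_radius K g)"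
  by (simp add: rad_def center_radius_def)

lemma lip_width_eq_INF_approx_error:
  "lip_width K \<gamma> N = (INF \<Phi>\<in>lip_maps \<gamma> N. approx_error K N \<Phi>)"
  by (simp add: lip_width_def approx_error_def)

lemma zero_in_unit_ball_of:
  assumes "is_norm N"
  shows "0 \<in> unit_ball_of N"
proof -
  have "N 0 = 0" using assms by (simp add: is_norm_def)
  then show ?thesis by (simp add: unit_ball_of_def)
qed

lemma const_in_lip_maps:
  assumes "0 \<le> \<gamma>" and "is_norm N"
  shows "(\<lambda>_. g) \<in> lip_maps \<gamma> N"
  using assms by (simp add: lip_maps_def is_norm_def)

lemma lip_maps_norm_diff_zero_le:
  assumes "0 \<le> \<gamma>" and "is_norm N" and "\<Phi> \<in> lip_maps \<gamma> N" and "y \<in> unit_ball_of N"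
  shows "norm (\<Phi> y - \<Phi> 0) \<le> \<gamma>"
proof -
  have "norm (\<Phi> y - \<Phi> 0) \<le> \<gamma> * N y"
    using assms(3,4) zero_in_unit_ball_of[OF assms(2)] by (force simp: lip_maps_def)
  also have "\<dots> \<le> \<gamma>"
    using assms(1,4) by (simp add: unit_ball_of_def mult_left_le)
  finally show ?thesis .
qed

lemma bdd_above_norm_diff:
  assumes "bounded K"
  shows "bdd_above ((\<lambda>f. norm (f - g)) ` K)"
proof -
  have "bdd_above (norm ` (\<lambda>f. f - g) ` K)"
    using bounded_translation_minus[OF assms] by (simp add: bdd_above_norm)
  then show ?thesis by (simp add: image_image)
qed

lemma norm_diff_le_center_radius:
  assumes "bounded K" and "f \<in> K"
  shows "norm (f - g) \<le> center_radius K g"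
  unfolding center_radius_def using cSUP_upper[OF assms(2) bdd_above_norm_diff[OF assms(1)]] .

lemma rad_le_center_radius:
  assumes "bounded K" and "K \<noteq> {}"
  shows "rad K \<le> center_radius K g"
proof -
  obtain f where "f \<in> K" using assms(2) by blast
  then have "\<And>g'. 0 \<le> center_radius K g'"
    using norm_diff_le_center_radius[OF assms(1)] norm_ge_zero order_trans by blast
  then have "bdd_below (range (center_radius K))" by (intro bdd_belowI2)
  then show ?thesis unfolding rad_eq_INF_center_radius by (rule cINF_lower) simp
qed

lemma approx_error_const:
  assumes "is_norm N"
  shows "approx_error K N (\<lambda>_. g) = center_radius K g"
proof -
  have "unit_ball_of N \<noteq> {}" using zero_in_unit_ball_of[OF assms] by blast
  then show ?thesis by (simp add: approx_error_def center_radius_def)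
qed

lemma center_radius_le_approx_error:
  assumes "bounded K" and "K \<noteq> {}" and "0 \<le> \<gamma>" and "is_norm N" and "\<Phi> \<in> lip_maps \<gamma> N"
  shows "center_radius K (\<Phi> 0) \<le> approx_error K N \<Phi> + \<gamma>"
proof -
  let ?err = "\<lambda>f. INF y\<in>unit_ball_of N. norm (f - \<Phi> y)"
  have zero_in_ball: "0 \<in> unit_ball_of N" using zero_in_unit_ball_of[OF assms(4)] .
  have err_le: "?err f \<le> norm (f - \<Phi> 0)" for f
    by (rule cINF_lower[OF _ zero_in_ball]) (intro bdd_belowI2[where m = 0] norm_ge_zero)
  have err_ge: "norm (f - \<Phi> 0) - \<gamma> \<le> ?err f" for f
  proof (rule cINF_greatest)
    show "unit_ball_of N \<noteq> {}" using zero_in_ball by blast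
  next
    fix y assume "y \<in> unit_ball_of N"
    then have "norm (\<Phi> y - \<Phi> 0) \<le> \<gamma>" using lip_maps_norm_diff_zero_le assms(3-5) by blast
    moreover have "norm (f - \<Phi> 0) \<le> norm (f - \<Phi> y) + norm (\<Phi> y - \<Phi> 0)"
      using norm_triangle_ineq[of "f - \<Phi> y" "\<Phi> y - \<Phi> 0"] by simp
    ultimately show "norm (f - \<Phi> 0) - \<gamma> \<le> norm (f - \<Phi> y)" by linarith
  qed
  have "bdd_above (?err ` K)"
    using err_le norm_diff_le_center_radius[OF assms(1)]
    by (intro bdd_aboveI2[where M = "center_radius K (\<Phi> 0)"]) (meson order_trans)
  then have err_le_error: "?err f \<le> approx_error K N \<Phi>" if "f \<in> K" for f
    unfolding approx_error_def using cSUP_upper[OF that] by blast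
  show ?thesis
    unfolding center_radius_def
  proof (rule cSUP_least[OF assms(2)])
    fix f assume "f \<in> K"
    then show "norm (f - \<Phi> 0) \<le> approx_error K N \<Phi> + \<gamma>"
      using err_ge[of f] err_le_error[of f] by linarith
  qed
qed

text \<open>For empty \<open>K\<close> both sides are the junk value \<open>Sup {} :: real\<close>.\<close>
lemma lip_width_empty:
  assumes "0 \<le> \<gamma>" and "is_norm N"
  shows "lip_width ({} :: 'a::real_normed_vector set) \<gamma> N = rad ({} :: 'a set)"
proof -
  have "(lip_maps \<gamma> N :: ('b \<Rightarrow> 'a) set) \<noteq> {}" using const_in_lip_maps[OF assms] by blast
  then show ?thesis by (simp add: lip_width_def rad_def cINF_const)
qed

theorem lemma2p4:
  fixes K :: "'a::banach set" and \<gamma> :: real and N :: "real ^ 'n \<Rightarrow> real"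
  assumes "bounded K" and "\<gamma> > 0" and "is_norm N"
  shows "rad K - \<gamma> \<le> lip_width K \<gamma> N \<and> lip_width K \<gamma> N \<le> rad K"
proof (cases "K = {}")
  case True
  have "lip_width K \<gamma> N = rad K"
    using True lip_width_empty[OF less_imp_le[OF assms(2)] assms(3)] by simp
  then show ?thesis using assms(2) by simp
next
  case False
  have lower: "rad K - \<gamma> \<le> approx_error K N \<Phi>" if "\<Phi> \<in> lip_maps \<gamma> N" for \<Phi>
    using rad_le_center_radius[OF assms(1) False, of "\<Phi> 0"]
      center_radius_le_approx_error[OF assms(1) False _ assms(3) that] assms(2) by simp
  have "bdd_below (approx_error K N ` lip_maps \<gamma> N)"
    using lower by (intro bdd_belowI2) blast
  then have "lip_width K \<gamma> N \<le> center_radius K g" for g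
    unfolding lip_width_eq_INF_approx_error
    using cINF_lower[OF _ const_in_lip_maps] approx_error_const assms(2,3)
    by (metis less_imp_le)
  then have "lip_width K \<gamma> N \<le> rad K"
    unfolding rad_eq_INF_center_radius by (intro cINF_greatest) auto
  moreover have "rad K - \<gamma> \<le> lip_width K \<gamma> N"
    unfolding lip_width_eq_INF_approx_error
    using const_in_lip_maps[of \<gamma> N] assms(2,3) lower by (intro cINF_greatest) auto
  ultimately show ?thesis by simp
qed

end
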